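(* Let $G=S_n$ and $H=S_b\wr S_a$ (the stabiliser of a partition of $\{1,\dots,n\}$ into $a$ blocks of size $b$), where $n=ab$, $a=b+1$ and $b\geqslant 3$. Then $b(G,H)=3$.
   Context: For a subgroup $H\leqslant G$, $H_G=\bigcap_{g\in G}H^g$ is the core of $H$, and $b(G,H)=\min\{|S| : S\subseteq G,\ \bigcap_{g\in S}H^g=H_G\}$. Equivalently here, $b(G,H)$ is the minimal number of partitions of $\{1,\dots,n\}$ into $a$ parts of size $b$ whose common stabiliser in $S_n$ is trivial. *)

theory Defs
  imports "HOL-Combinatorics.Permutations"
begin

definition sym_group :: "nat \<Rightarrow> (nat \<Rightarrow> nat) set" where
  "sym_group n = {p. p permutes {..<n}}"

definition std_partition :: "nat \<Rightarrow> nat \<Rightarrow> nat set set" where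
  "std_partition a b = (\<lambda>i. {i*b..<(i+1)*b}) ` {..<a}"

text \<open>The wreath product S_b wr S_a inside S_(ab): the stabiliser of the standard partition.\<close>
definition wreath_subgroup :: "nat \<Rightarrow> nat \<Rightarrow> (nat \<Rightarrow> nat) set" where
  "wreath_subgroup a b =
     {p \<in> sym_group (a*b). \<forall>B \<in> std_partition a b. p ` B \<in> std_partition a b}"

definition conj_set :: "('a \<Rightarrow> 'a) \<Rightarrow> ('a \<Rightarrow> 'a) set \<Rightarrow> ('a \<Rightarrow> 'a) set" where
  "conj_set g H = (\<lambda>h. inv g \<circ> h \<circ> g) ` H"

definition core :: "('a \<Rightarrow> 'a) set \<Rightarrow> ('a \<Rightarrow> 'a) set \<Rightarrow> ('a \<Rightarrow> 'a) set" where
  "core G H = (\<Inter>g\<in>G. conj_set g H)"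

definition base_size :: "('a \<Rightarrow> 'a) set \<Rightarrow> ('a \<Rightarrow> 'a) set \<Rightarrow> nat" where
  "base_size G H = (LEAST k. \<exists>S. S \<subseteq> G \<and> finite S \<and> card S = k \<and>
                              (\<Inter>g\<in>S. conj_set g H) = core G H)"

end

(*
  The conjugate H^g is the stabiliser of the image g^-1(P0) of the standard partition P0, so
  b(G,H) is the least number of partitions of {0..<n} into b+1 blocks of size b whose common
  stabiliser is trivial (the core of H is trivial).

  Two such partitions P and Q never suffice. Either a block of P and a block of Q share two
  points, and the transposition of these points stabilises both; or any two blocks meet in at
  most one point. Then each block of P meets b blocks of Q and misses exactly one, and swapping
  two blocks of P together with the two blocks of Q that they miss is induced by a permutation.

  Three partitions do suffice. Read x < (b+1)*b as the cell (x div b, col b x) off the diagonal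
  of a (b+1) x (b+1) grid. A permutation preserving rows and columns permutes the row indices
  and the column indices by the same permutation pi, because no cell lies on the diagonal. The
  third partition consists of the rows shifted cyclically by one point; its block ending at
  (i+1)*b contains two points of row i and the cell (i+1, 0), which forces pi 0 = 0 and
  pi (i+1) = pi i + 1.
*)
theory Submission
  imports Defs "HOL-Library.Disjoint_Sets"
begin

section \<open>Stabilisers of partitions\<close>

definition partition_stabiliser :: "'a set \<Rightarrow> 'a set set \<Rightarrow> ('a \<Rightarrow> 'a) set" where
  "partition_stabiliser U P = {t. t permutes U \<and> (\<forall>B\<in>P. t ` B \<in> P)}"

lemma id_in_partition_stabiliser [simp]: "id \<in> partition_stabiliser U P"
  by (simp add: partition_stabiliser_def permutes_id)

lemma wreath_subgroup_eq_partition_stabiliser: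
  "wreath_subgroup a b = partition_stabiliser {..<a*b} (std_partition a b)"
  by (auto simp: wreath_subgroup_def sym_group_def partition_stabiliser_def)

lemma conj_set_partition_stabiliser:
  assumes g: "g permutes U"
  shows "conj_set g (partition_stabiliser U P) = partition_stabiliser U ((`) (inv g) ` P)"
proof (intro equalityI subsetI)
  fix t assume "t \<in> conj_set g (partition_stabiliser U P)"
  then obtain h where h: "h permutes U" "\<forall>B\<in>P. h ` B \<in> P" and t: "t = inv g \<circ> h \<circ> g"
    by (auto simp: conj_set_def partition_stabiliser_def)
  have "t permutes U"
    unfolding t by (intro permutes_compose permutes_inv g h(1))
  moreover have "t ` inv g ` B = inv g ` h ` B" for B
    using permutes_inverses(1)[OF g] by (simp add: t image_comp comp_def)
  ultimately show "t \<in> partition_stabiliser U ((`) (inv g) ` P)"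
    using h(2) by (auto simp: partition_stabiliser_def)
next
  fix t assume "t \<in> partition_stabiliser U ((`) (inv g) ` P)"
  then have t: "t permutes U" "\<And>B. B \<in> P \<Longrightarrow> t ` inv g ` B \<in> (`) (inv g) ` P"
    by (auto simp: partition_stabiliser_def)
  define h where "h = g \<circ> t \<circ> inv g"
  have "h ` B \<in> P" if B: "B \<in> P" for B
  proof -
    obtain B' where "B' \<in> P" "t ` inv g ` B = inv g ` B'" using t(2)[OF B] by (rule imageE)
    moreover have "h ` B = g ` t ` inv g ` B" by (simp add: h_def image_comp)
    ultimately show ?thesis
      using permutes_inverses(1)[OF g] by (simp add: image_comp comp_def)
  qed
  moreover have "h permutes U"
    unfolding h_def by (intro permutes_compose permutes_inv g t(1))
  ultimately have "h \<in> partition_stabiliser U P"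
    by (simp add: partition_stabiliser_def)
  moreover have "t = inv g \<circ> h \<circ> g"
    using permutes_inverses(2)[OF g] by (simp add: h_def fun_eq_iff)
  ultimately show "t \<in> conj_set g (partition_stabiliser U P)"
    unfolding conj_set_def by blast
qed

definition fibres :: "('a \<Rightarrow> 'b) \<Rightarrow> 'a set \<Rightarrow> 'a set set" where
  "fibres f U = (\<lambda>x. {y \<in> U. f y = f x}) ` U"

lemma mem_block_iff: "(b::nat) > 0 \<Longrightarrow> y \<in> {i*b..<(i+1)*b} \<longleftrightarrow> y div b = i"
  by (metis atLeastLessThan_iff div_nat_eqI div_times_less_eq_dividend dividend_less_div_times
      mult.commute mult_Suc_right add.commute plus_1_eq_Suc)

lemma std_partition_eq_fibres:
  assumes b: "b > 0"
  shows "std_partition a b = fibres (\<lambda>x. x div b) {..<a*b}"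
proof -
  have block: "{i*b..<(i+1)*b} = {y \<in> {..<a*b}. y div b = i}" if "i < a" for i
  proof -
    have "{i*b..<(i+1)*b} \<subseteq> {..<a*b}"
      using mult_le_mono1[of "i+1" a b] that by auto
    then show ?thesis
      using mem_block_iff[OF b] by blast
  qed
  have "std_partition a b = (\<lambda>i. {y \<in> {..<a*b}. y div b = i}) ` {..<a}"
    unfolding std_partition_def using block by (intro image_cong) auto
  also have "{..<a} = (\<lambda>x. x div b) ` {..<a*b}"
    using b by (auto simp: less_mult_imp_div_less image_iff intro!: bexI[where x="_*b"])
  finally show ?thesis
    unfolding fibres_def image_image .
qed

lemma image_inv_fibres:
  assumes g: "g permutes U"
  shows "(`) (inv g) ` fibres f U = fibres (f \<circ> g) U"
proof -
  have fibre: "inv g ` {y \<in> U. f y = f x} = {z \<in> U. f (g z) = f (g (inv g x))}" for x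
  proof (intro equalityI subsetI)
    fix z assume "z \<in> inv g ` {y \<in> U. f y = f x}"
    then show "z \<in> {z \<in> U. f (g z) = f (g (inv g x))}"
      using permutes_in_image[OF permutes_inv[OF g]] permutes_inverses(1)[OF g] by auto
  next
    fix z assume "z \<in> {z \<in> U. f (g z) = f (g (inv g x))}"
    moreover have "z = inv g (g z)" using permutes_inverses(2)[OF g] by simp
    ultimately show "z \<in> inv g ` {y \<in> U. f y = f x}"
      using permutes_in_image[OF g] permutes_inverses(1)[OF g] by (intro image_eqI) auto
  qed
  have "(`) (inv g) ` fibres f U = (\<lambda>x. {z \<in> U. f (g z) = f (g x)}) ` (inv g ` U)"
    unfolding fibres_def image_image fibre ..
  also have "inv g ` U = U"
    using permutes_image[OF permutes_inv[OF g]] .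
  finally show ?thesis
    unfolding fibres_def by simp
qed

lemma permutes_image_fibre:
  assumes t: "t permutes U" and x: "x \<in> U"
    and pres: "\<forall>x\<in>U. \<forall>y\<in>U. f x = f y \<longleftrightarrow> f (t x) = f (t y)"
  shows "t ` {y \<in> U. f y = f x} = {z \<in> U. f z = f (t x)}"
proof (intro equalityI subsetI)
  fix z assume "z \<in> t ` {y \<in> U. f y = f x}"
  then show "z \<in> {z \<in> U. f z = f (t x)}"
    using pres x permutes_in_image[OF t] by auto
next
  fix z assume z: "z \<in> {z \<in> U. f z = f (t x)}"
  then have "inv t z \<in> U" "t (inv t z) = z"
    using permutes_in_image[OF permutes_inv[OF t]] permutes_inverses(1)[OF t] by auto
  with pres x z show "z \<in> t ` {y \<in> U. f y = f x}"
    by (metis (mono_tags, lifting) image_eqI mem_Collect_eq)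
qed

lemma partition_stabiliser_fibresD:
  assumes "t \<in> partition_stabiliser U (fibres f U)" and x: "x \<in> U" and y: "y \<in> U"
  shows "f x = f y \<longleftrightarrow> f (t x) = f (t y)"
proof -
  have t: "t permutes U" and "\<And>B. B \<in> fibres f U \<Longrightarrow> t ` B \<in> fibres f U"
    using assms(1) by (simp_all add: partition_stabiliser_def)
  then have pres: "\<exists>u\<in>U. t ` {y \<in> U. f y = f x} = {y \<in> U. f y = f u}" if "x \<in> U" for x
    using that unfolding fibres_def by blast
  obtain u v where u: "t ` {z \<in> U. f z = f x} = {z \<in> U. f z = f u}"
    and v: "t ` {z \<in> U. f z = f y} = {z \<in> U. f z = f v}"
    using pres[OF x] pres[OF y] by blast
  have "t x \<in> {z \<in> U. f z = f u}" "t y \<in> {z \<in> U. f z = f v}"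
    using x y by (simp_all flip: u v)
  then have fu: "f u = f (t x)" and fv: "f v = f (t y)"
    by simp_all
  show ?thesis
  proof
    assume "f x = f y"
    then have "t y \<in> {z \<in> U. f z = f u}"
      using y by (simp flip: u)
    then show "f (t x) = f (t y)" using fu by simp
  next
    assume "f (t x) = f (t y)"
    then have "t ` {z \<in> U. f z = f x} = t ` {z \<in> U. f z = f y}"
      using u v fu fv by simp
    then have "{z \<in> U. f z = f x} = {z \<in> U. f z = f y}"
      using permutes_inj[OF t] by (simp add: inj_image_eq_iff)
    then have "y \<in> {z \<in> U. f z = f x}"
      using y by simp
    then show "f x = f y" by simp
  qed
qed

lemma partition_stabiliser_fibres:
  "t \<in> partition_stabiliser U (fibres f U) \<longleftrightarrow>
     t permutes U \<and> (\<forall>x\<in>U. \<forall>y\<in>U. f x = f y \<longleftrightarrow> f (t x) = f (t y))"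
proof
  assume t: "t \<in> partition_stabiliser U (fibres f U)"
  then show "t permutes U \<and> (\<forall>x\<in>U. \<forall>y\<in>U. f x = f y \<longleftrightarrow> f (t x) = f (t y))"
    using partition_stabiliser_fibresD[OF t] by (simp add: partition_stabiliser_def)
next
  assume "t permutes U \<and> (\<forall>x\<in>U. \<forall>y\<in>U. f x = f y \<longleftrightarrow> f (t x) = f (t y))"
  then have t: "t permutes U" and pres: "\<forall>x\<in>U. \<forall>y\<in>U. f x = f y \<longleftrightarrow> f (t x) = f (t y)"
    by auto
  have "t ` {y \<in> U. f y = f x} \<in> fibres f U" if "x \<in> U" for x
    unfolding permutes_image_fibre[OF t that pres] fibres_def
    using permutes_in_image[OF t] that by blast
  then show "t \<in> partition_stabiliser U (fibres f U)"
    using t unfolding partition_stabiliser_def fibres_def by blast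
qed

definition equipartition :: "'a set \<Rightarrow> 'a set set \<Rightarrow> nat \<Rightarrow> nat \<Rightarrow> bool" where
  "equipartition U P k b \<longleftrightarrow> partition_on U P \<and> card P = k \<and> (\<forall>B\<in>P. card B = b)"

lemma partition_on_block_unique:
  "partition_on U P \<Longrightarrow> B \<in> P \<Longrightarrow> C \<in> P \<Longrightarrow> x \<in> B \<Longrightarrow> x \<in> C \<Longrightarrow> B = C"
  by (auto simp: partition_on_def disjoint_def)

lemma partition_on_block_choice:
  assumes "partition_on U P"
  obtains blk where "\<And>x. x \<in> U \<Longrightarrow> blk x \<in> P \<and> x \<in> blk x"
proof -
  have "\<forall>x\<in>U. \<exists>B. B \<in> P \<and> x \<in> B"
    using partition_onD1[OF assms] by blast
  then show ?thesis
    using that by (metis bchoice)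
qed

lemma equipartition_std_partition:
  assumes "b > 0"
  shows "equipartition {..<a*b} (std_partition a b) a b"
proof -
  define blk where "blk i = {i*b..<(i+1)*b}" for i
  have mem_blk: "y \<in> blk i \<longleftrightarrow> y div b = i" for y i
    unfolding blk_def using assms by (rule mem_block_iff)
  have std: "std_partition a b = blk ` {..<a}"
    unfolding std_partition_def blk_def ..
  have "i*b \<in> blk i" for i
    using assms by (simp add: blk_def)
  then have "{} \<notin> blk ` {..<a}" and inj: "inj_on blk {..<a}"
    by (auto intro!: inj_onI) (metis mem_blk)
  moreover have "\<Union>(blk ` {..<a}) = {..<a*b}"
    using assms by (auto simp: mem_blk less_mult_imp_div_less)
      (metis div_less_iff_less_mult lessThan_iff)
  ultimately have "partition_on {..<a*b} (blk ` {..<a})"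
    by (intro partition_onI) (auto simp: disjnt_def mem_blk)
  moreover have "card (blk i) = b" for i
    by (simp add: blk_def)
  ultimately show ?thesis
    unfolding equipartition_def std by (simp add: card_image[OF inj])
qed

lemma equipartition_image:
  assumes f: "f permutes U" and P: "equipartition U P k b"
  shows "equipartition U ((`) f ` P) k b"
proof -
  have inj: "inj f" using permutes_inj[OF f] .
  have "partition_on (f ` U) ((`) f ` P - {{}})"
    using P inj by (intro partition_on_inj_image) (auto simp: equipartition_def inj_on_def)
  moreover have "{} \<notin> (`) f ` P"
    using partition_onD3 P by (force simp: equipartition_def)
  moreover have "card ((`) f ` P) = card P"
    using inj by (intro card_image inj_onI) (simp add: inj_image_eq_iff)
  moreover have "card (f ` B) = card B" for B
    using inj by (simp add: card_image inj_on_subset)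
  ultimately show ?thesis
    using P permutes_image[OF f] by (auto simp: equipartition_def)
qed

lemma transpose_in_partition_stabiliser:
  assumes P: "partition_on U P" and B: "B \<in> P" "x \<in> B" "y \<in> B"
  shows "transpose x y \<in> partition_stabiliser U P"
proof -
  have "x \<in> U" "y \<in> U"
    using partition_onD1[OF P] B by auto
  then have "transpose x y permutes U"
    by (rule permutes_swap_id)
  moreover have "transpose x y ` D = D" if "D \<in> P" for D
  proof -
    have "x \<in> D \<longleftrightarrow> y \<in> D"
      using partition_on_block_unique[OF P] that B by blast
    then show ?thesis by simp
  qed
  ultimately show ?thesis
    by (simp add: partition_stabiliser_def)
qed

section \<open>Two equipartitions have a common non-trivial stabiliser\<close>

lemma involution_image_eq:
  assumes "\<And>x. t (t x) = x" "t ` A \<subseteq> A'" "t ` A' \<subseteq> A"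
  shows "t ` A = A'"
proof
  have "A' = t ` t ` A'"
    by (simp add: image_image assms(1))
  also have "\<dots> \<subseteq> t ` A"
    using assms(3) by (rule image_mono)
  finally show "A' \<subseteq> t ` A" .
qed (fact assms(2))

lemma involution_moving_blocks:
  assumes P: "partition_on U P" and Q: "partition_on U Q"
    and meet: "\<And>B C x y. B \<in> P \<Longrightarrow> C \<in> Q \<Longrightarrow> x \<in> B \<inter> C \<Longrightarrow> y \<in> B \<inter> C \<Longrightarrow> x = y"
    and \<sigma>: "\<And>B. B \<in> P \<Longrightarrow> \<sigma> B \<in> P" "\<And>B. \<sigma> (\<sigma> B) = B"
    and \<tau>: "\<And>C. C \<in> Q \<Longrightarrow> \<tau> C \<in> Q" "\<And>C. \<tau> (\<tau> C) = C"
    and meet_preserved: "\<And>B C. B \<in> P \<Longrightarrow> C \<in> Q \<Longrightarrow> B \<inter> C \<noteq> {} \<Longrightarrow> \<sigma> B \<inter> \<tau> C \<noteq> {}"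
  obtains t where "\<And>x. t (t x) = x" "\<And>x. x \<notin> U \<Longrightarrow> t x = x"
    "\<And>B x. B \<in> P \<Longrightarrow> x \<in> B \<Longrightarrow> t x \<in> \<sigma> B" "\<And>C x. C \<in> Q \<Longrightarrow> x \<in> C \<Longrightarrow> t x \<in> \<tau> C"
proof -
  obtain row where row: "\<And>x. x \<in> U \<Longrightarrow> row x \<in> P \<and> x \<in> row x"
    using partition_on_block_choice[OF P] by blast
  obtain col where col: "\<And>x. x \<in> U \<Longrightarrow> col x \<in> Q \<and> x \<in> col x"
    using partition_on_block_choice[OF Q] by blast
  have row_eq: "row x = B" if "B \<in> P" "x \<in> B" for B x
    using that row partition_on_block_unique[OF P] partition_onD1[OF P] by blast
  have col_eq: "col x = C" if "C \<in> Q" "x \<in> C" for C x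
    using that col partition_on_block_unique[OF Q] partition_onD1[OF Q] by blast
  define t where "t x = (if x \<in> U then SOME y. y \<in> \<sigma> (row x) \<inter> \<tau> (col x) else x)" for x
  have t_in: "t x \<in> \<sigma> (row x) \<inter> \<tau> (col x)" if "x \<in> U" for x
  proof -
    have "\<sigma> (row x) \<inter> \<tau> (col x) \<noteq> {}"
      using meet_preserved row col that by blast
    then show ?thesis
      unfolding t_def using that some_in_eq[of "\<sigma> (row x) \<inter> \<tau> (col x)"] by simp
  qed
  have "t (t x) = x" for x
  proof (cases "x \<in> U")
    case True
    have tx: "t x \<in> U"
      using t_in[OF True] \<sigma>(1) row[OF True] partition_onD1[OF P] by blast
    have "row (t x) = \<sigma> (row x)" "col (t x) = \<tau> (col x)"
      using t_in[OF True] row_eq col_eq \<sigma>(1) \<tau>(1) row col True by auto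
    then have "t (t x) \<in> row x \<inter> col x"
      using t_in[OF tx] \<sigma>(2) \<tau>(2) by simp
    then show ?thesis
      using meet row col True by blast
  qed (simp add: t_def)
  moreover have "t x = x" if "x \<notin> U" for x
    using that by (simp add: t_def)
  moreover have "t x \<in> \<sigma> B" if "B \<in> P" "x \<in> B" for B x
    using t_in row_eq[OF that] that partition_onD1[OF P] by blast
  moreover have "t x \<in> \<tau> C" if "C \<in> Q" "x \<in> C" for C x
    using t_in col_eq[OF that] that partition_onD1[OF Q] by blast
  ultimately show ?thesis
    by (rule that)
qed

lemma permutation_moving_blocks:
  assumes P: "partition_on U P" and Q: "partition_on U Q"
    and meet: "\<And>B C x y. B \<in> P \<Longrightarrow> C \<in> Q \<Longrightarrow> x \<in> B \<inter> C \<Longrightarrow> y \<in> B \<inter> C \<Longrightarrow> x = y"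
    and \<sigma>: "\<And>B. B \<in> P \<Longrightarrow> \<sigma> B \<in> P" "\<And>B. \<sigma> (\<sigma> B) = B"
    and \<tau>: "\<And>C. C \<in> Q \<Longrightarrow> \<tau> C \<in> Q" "\<And>C. \<tau> (\<tau> C) = C"
    and meet_preserved: "\<And>B C. B \<in> P \<Longrightarrow> C \<in> Q \<Longrightarrow> B \<inter> C \<noteq> {} \<Longrightarrow> \<sigma> B \<inter> \<tau> C \<noteq> {}"
  obtains t where "t permutes U" "\<And>B. B \<in> P \<Longrightarrow> t ` B = \<sigma> B" "\<And>C. C \<in> Q \<Longrightarrow> t ` C = \<tau> C"
proof -
  obtain t where t_t: "\<And>x. t (t x) = x" and t_out: "\<And>x. x \<notin> U \<Longrightarrow> t x = x"
    and t_P: "\<And>B x. B \<in> P \<Longrightarrow> x \<in> B \<Longrightarrow> t x \<in> \<sigma> B"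
    and t_Q: "\<And>C x. C \<in> Q \<Longrightarrow> x \<in> C \<Longrightarrow> t x \<in> \<tau> C"
    using P Q meet \<sigma> \<tau> meet_preserved by (rule involution_moving_blocks) auto
  have "t permutes U"
    unfolding permutes_def using t_t t_out by metis
  moreover have "t ` B = \<sigma> B" if "B \<in> P" for B
    using t_P[OF that] t_P[OF \<sigma>(1)[OF that]] \<sigma>(2)
    by (intro involution_image_eq[OF t_t]) (simp_all add: image_subset_iff)
  moreover have "t ` C = \<tau> C" if "C \<in> Q" for C
    using t_Q[OF that] t_Q[OF \<tau>(1)[OF that]] \<tau>(2)
    by (intro involution_image_eq[OF t_t]) (simp_all add: image_subset_iff)
  ultimately show ?thesis
    by (rule that)
qed

locale transversal_equipartitions =
  fixes U :: "'a set" and P Q :: "'a set set" and b :: nat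
  assumes P: "equipartition U P (Suc b) b" and Q: "equipartition U Q (Suc b) b"
    and meet: "\<And>B C x y. B \<in> P \<Longrightarrow> C \<in> Q \<Longrightarrow> x \<in> B \<inter> C \<Longrightarrow> y \<in> B \<inter> C \<Longrightarrow> x = y"
begin

lemma swap: "transversal_equipartitions U Q P b"
  using P Q meet by unfold_locales blast+

lemma unique_disjoint_block:
  assumes B: "B \<in> P"
  shows "\<exists>!C. C \<in> Q \<and> B \<inter> C = {}"
proof -
  have Q': "partition_on U Q" and "card Q = Suc b"
    using Q by (auto simp: equipartition_def)
  then have "finite Q"
    by (metis card.infinite nat.distinct(1))
  obtain col where col: "\<And>x. x \<in> U \<Longrightarrow> col x \<in> Q \<and> x \<in> col x"
    using partition_on_block_choice[OF Q'] by blast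
  have BU: "B \<subseteq> U" and "card B = b"
    using P B partition_onD1 by (auto simp: equipartition_def)
  have col_B: "col ` B \<subseteq> Q"
    using col BU by auto
  \<comment> \<open>The \<open>b\<close> points of \<open>B\<close> lie in distinct blocks of \<open>Q\<close>, so exactly one block of \<open>Q\<close> is missed.\<close>
  have "inj_on col B"
  proof (rule inj_onI)
    fix x y assume "x \<in> B" "y \<in> B" "col x = col y"
    then show "x = y"
      using meet[OF B, of "col x" x y] col BU by auto
  qed
  then have "card (col ` B) = b"
    by (simp add: card_image \<open>card B = b\<close>)
  then have "card (Q - col ` B) = 1"
    using card_Diff_subset[OF finite_subset[OF col_B \<open>finite Q\<close>] col_B] \<open>card Q = Suc b\<close> by simp
  moreover have "C \<in> Q \<and> B \<inter> C = {} \<longleftrightarrow> C \<in> Q - col ` B" for C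
  proof
    assume "C \<in> Q \<and> B \<inter> C = {}"
    then show "C \<in> Q - col ` B"
      using col BU by blast
  next
    assume C: "C \<in> Q - col ` B"
    have "x \<notin> C" if "x \<in> B" for x
      using C col[of x] that BU partition_on_block_unique[OF Q', of C "col x" x] by auto
    then show "C \<in> Q \<and> B \<inter> C = {}"
      using C by blast
  qed
  ultimately show ?thesis
    by (metis card_1_singletonE singletonD singletonI)
qed

definition missing_block :: "'a set \<Rightarrow> 'a set" where
  "missing_block B = (THE C. C \<in> Q \<and> B \<inter> C = {})"

lemma missing_block: "B \<in> P \<Longrightarrow> missing_block B \<in> Q \<and> B \<inter> missing_block B = {}"
  unfolding missing_block_def by (rule theI'[OF unique_disjoint_block])

lemma missing_block_eq:
  assumes "B \<in> P" "C \<in> Q" "B \<inter> C = {}"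
  shows "missing_block B = C"
  unfolding missing_block_def using assms by (intro the1_equality unique_disjoint_block) auto

lemma inj_on_missing_block: "inj_on missing_block P"
proof (rule inj_onI)
  fix B1 B2 assume B: "B1 \<in> P" "B2 \<in> P" "missing_block B1 = missing_block B2"
  then have "missing_block B1 \<inter> B1 = {}" "missing_block B1 \<inter> B2 = {}"
    using missing_block by auto
  then show "B1 = B2"
    using transversal_equipartitions.unique_disjoint_block[OF swap missing_block[THEN conjunct1]] B
    by blast
qed

lemma common_stabiliser:
  assumes "b \<ge> 1"
  obtains t where "t \<in> partition_stabiliser U P" "t \<in> partition_stabiliser U Q" "t \<noteq> id"
proof -
  have P': "partition_on U P" and Q': "partition_on U Q" and "card P = Suc b"
    using P Q by (auto simp: equipartition_def)
  then obtain P1 where P1: "P1 \<in> P"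
    by (metis card.empty ex_in_conv nat.distinct(1))
  then have "card (P - {P1}) \<noteq> 0"
    using \<open>card P = Suc b\<close> assms by simp
  then obtain P2 where P2: "P2 \<in> P" "P2 \<noteq> P1"
    by (metis Diff_iff card.empty ex_in_conv insertI1)
  define \<sigma> where "\<sigma> = transpose P1 P2"
  define \<tau> where "\<tau> = transpose (missing_block P1) (missing_block P2)"
  have \<sigma>_P: "\<sigma> B \<in> P" if "B \<in> P" for B
    using that P1 P2 by (auto simp: \<sigma>_def transpose_def)
  have \<tau>_Q: "\<tau> C \<in> Q" if "C \<in> Q" for C
    using that missing_block P1 P2 by (auto simp: \<tau>_def transpose_def)
  have \<sigma>_\<sigma>: "\<sigma> (\<sigma> B) = B" and \<tau>_\<tau>: "\<tau> (\<tau> C) = C" for B C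
    by (simp_all add: \<sigma>_def \<tau>_def)
  have \<tau>_missing: "\<tau> (missing_block B) = missing_block (\<sigma> B)" if "B \<in> P" for B
    using that inj_on_missing_block P1 P2 by (auto simp: \<sigma>_def \<tau>_def transpose_def inj_on_eq_iff)
  have meet_preserved: "\<sigma> B \<inter> \<tau> C \<noteq> {}" if "B \<in> P" "C \<in> Q" "B \<inter> C \<noteq> {}" for B C
  proof
    assume "\<sigma> B \<inter> \<tau> C = {}"
    then have "\<tau> C = \<tau> (missing_block B)"
      using missing_block_eq[OF \<sigma>_P \<tau>_Q] \<tau>_missing that by simp
    then have "C = missing_block B"
      by (metis \<tau>_\<tau>)
    then show False
      using missing_block that by blast
  qed
  obtain t where t: "t permutes U" "\<And>B. B \<in> P \<Longrightarrow> t ` B = \<sigma> B" "\<And>C. C \<in> Q \<Longrightarrow> t ` C = \<tau> C"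
    using P' Q' meet \<sigma>_P \<sigma>_\<sigma> \<tau>_Q \<tau>_\<tau> meet_preserved by (rule permutation_moving_blocks) auto
  show thesis
  proof
    show "t \<in> partition_stabiliser U P" "t \<in> partition_stabiliser U Q"
      using t \<sigma>_P \<tau>_Q by (auto simp: partition_stabiliser_def)
    show "t \<noteq> id"
      using t(2)[OF P1] P2 by (auto simp: \<sigma>_def)
  qed
qed

end

lemma equipartitions_common_stabiliser:
  assumes P: "equipartition U P (Suc b) b" and Q: "equipartition U Q (Suc b) b" and "b \<ge> 1"
  shows "\<exists>t \<in> partition_stabiliser U P \<inter> partition_stabiliser U Q. t \<noteq> id"
proof (cases "\<exists>B\<in>P. \<exists>C\<in>Q. \<exists>x y. x \<in> B \<inter> C \<and> y \<in> B \<inter> C \<and> x \<noteq> y")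
  case True
  then obtain B C x y where "B \<in> P" "C \<in> Q" "x \<in> B \<inter> C" "y \<in> B \<inter> C" "x \<noteq> y"
    by blast
  then show ?thesis
    using P Q transpose_in_partition_stabiliser[of U _ _ x y]
    by (intro bexI[where x="transpose x y"]) (auto simp: equipartition_def transpose_eq_id_iff)
next
  case False
  then have "x = y" if "B \<in> P" "C \<in> Q" "x \<in> B \<inter> C" "y \<in> B \<inter> C" for B C x y
    using that by blast
  then obtain t where "t \<in> partition_stabiliser U P" "t \<in> partition_stabiliser U Q" "t \<noteq> id"
    using transversal_equipartitions.common_stabiliser[OF transversal_equipartitions.intro[OF P Q]]
      \<open>b \<ge> 1\<close> by blast
  then show ?thesis
    by blast
qed

section \<open>Rows, columns and shifted rows\<close>

text \<open>The point \<open>x < (b+1)*b\<close> is the cell in row \<open>x div b\<close> and column \<open>col b x\<close> of the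
  off-diagonal part of a \<open>(b+1) \<times> (b+1)\<close> grid; \<open>cell\<close> is the inverse coding. The shifted rows
  are the blocks \<open>{i*b+1..(i+1)*b}\<close>, with \<open>0\<close> joining the last one.\<close>

definition col :: "nat \<Rightarrow> nat \<Rightarrow> nat" where
  "col b x = (if x mod b < x div b then x mod b else x mod b + 1)"

definition cell :: "nat \<Rightarrow> nat \<Rightarrow> nat \<Rightarrow> nat" where
  "cell b i j = i*b + (if j < i then j else j - 1)"

definition shifted_row :: "nat \<Rightarrow> nat \<Rightarrow> nat" where
  "shifted_row b x = (if x = 0 then b else (x - 1) div b)"

lemma div_le_of_less_Suc_mult: "(x::nat) < (b+1)*b \<Longrightarrow> x div b \<le> b"
  using less_mult_imp_div_less[of x "b+1" b] by simp

lemma col_le: "x < (b+1)*b \<Longrightarrow> col b x \<le> b"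
  by (cases "b = 0") (auto simp: col_def div_le_of_less_Suc_mult Suc_leI)

lemma col_neq_div: "col b x \<noteq> x div b"
  by (simp add: col_def)

lemma cell_coords:
  assumes "i \<le> b" "j \<le> b" "i \<noteq> j"
  shows "cell b i j < (b+1)*b" "cell b i j div b = i" "col b (cell b i j) = j"
proof -
  define k where "k = (if j < i then j else j - 1)"
  have k: "k < b" "cell b i j = i*b + k"
    using assms by (auto simp: k_def cell_def)
  have "i*b + k < (i+1)*b" using k by simp
  also have "\<dots> \<le> (b+1)*b" using assms by (intro mult_le_mono1) simp
  finally show "cell b i j < (b+1)*b" using k by simp
  show d: "cell b i j div b = i" using k by simp
  have "cell b i j mod b = k" using k by simp
  then show "col b (cell b i j) = j"
    using assms d by (auto simp: col_def k_def)
qed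

lemma cell_of_coords: "cell b (x div b) (col b x) = x"
  by (auto simp: cell_def col_def)

lemma shifted_row_eq_div:
  assumes "x mod b \<noteq> 0"
  shows "shifted_row b x = x div b"
proof (cases "b = 0")
  case False
  define q r where "q = x div b" and "r = x mod b"
  have x: "x = q*b + r" and r: "0 < r" "r < b"
    using assms False by (simp_all add: q_def r_def)
  then have "(x - 1) div b = q"
    by (intro div_nat_eqI) (simp_all add: algebra_simps)
  moreover have "x \<noteq> 0"
    using x r by simp
  ultimately show ?thesis
    unfolding shifted_row_def q_def by simp
qed (use assms in \<open>simp add: shifted_row_def\<close>)

lemma eq_mult_of_col_eq_0:
  assumes "col b x = 0"
  shows "x = (shifted_row b x + 1) * b"
proof -
  have "x mod b = 0" "0 < x div b"
    using assms by (auto simp: col_def split: if_splits)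
  moreover obtain r where "x div b = Suc r"
    using \<open>0 < x div b\<close> gr0_conv_Suc by blast
  ultimately have x: "x = Suc r * b" and "b > 0"
    using div_mult_mod_eq[of x b] by (auto intro: gr0I)
  then have "(x - 1) div b = r"
    by (intro div_nat_eqI) (auto simp: mult.commute)
  then show ?thesis
    using x \<open>b > 0\<close> by (simp add: shifted_row_def)
qed

lemma shifted_row_eq_div_of_twin:
  assumes "x \<noteq> y" "x div b = y div b" "shifted_row b x = shifted_row b y"
  shows "shifted_row b x = x div b"
proof (cases "x mod b = 0 \<and> y mod b = 0")
  case True
  then have "x = y"
    using assms(2) div_mult_mod_eq[of x b] div_mult_mod_eq[of y b] by simp
  then show ?thesis
    using assms(1) by simp
next
  case False
  then show ?thesis
    using assms(2,3) shifted_row_eq_div by metis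
qed

lemma eq_of_shifted_row_eq_col:
  assumes "b \<noteq> 1" "shifted_row b x = col b x"
  shows "x = b"
proof (cases "x mod b = 0")
  case True
  show ?thesis
  proof (cases "x = 0")
    case True
    then show ?thesis
      using assms by (simp add: shifted_row_def col_def)
  next
    case False
    then have "0 < x div b"
      using \<open>x mod b = 0\<close> div_mult_mod_eq[of x b] by (metis add_0_right mult_0 neq0_conv)
    then have "col b x = 0"
      using \<open>x mod b = 0\<close> by (simp add: col_def)
    then show ?thesis
      using eq_mult_of_col_eq_0[of b x] assms(2) by simp
  qed
next
  case False
  then show ?thesis
    using assms(2) shifted_row_eq_div col_neq_div by metis
qed

definition transpose_cells :: "nat \<Rightarrow> nat \<Rightarrow> nat" where
  "transpose_cells b x = (if x < (b+1)*b then cell b (col b x) (x div b) else x)"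

definition cyclic_pred :: "nat \<Rightarrow> nat \<Rightarrow> nat" where
  "cyclic_pred N x = (if x < N then (if x = 0 then N - 1 else x - 1) else x)"

lemma transpose_cells_coords:
  assumes "x < (b+1)*b"
  shows "transpose_cells b x < (b+1)*b" "transpose_cells b x div b = col b x"
    "col b (transpose_cells b x) = x div b"
  using cell_coords[of "col b x" b "x div b"] col_le[OF assms] div_le_of_less_Suc_mult[OF assms]
    col_neq_div[of b x] assms
  by (simp_all add: transpose_cells_def)

lemma transpose_cells_permutes: "transpose_cells b permutes {..<(b+1)*b}"
proof -
  have "transpose_cells b (transpose_cells b x) = x" for x
  proof (cases "x < (b+1)*b")
    case True
    then show ?thesis
      using transpose_cells_coords[OF True] cell_of_coords[of b x]
      by (simp add: transpose_cells_def[of b "transpose_cells b x"])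
  qed (simp add: transpose_cells_def)
  then have "bij_betw (transpose_cells b) {..<(b+1)*b} {..<(b+1)*b}"
    using transpose_cells_coords(1) by (intro bij_betw_byWitness[where f'="transpose_cells b"]) auto
  then show ?thesis
    by (rule bij_imp_permutes) (simp add: transpose_cells_def)
qed

lemma cyclic_pred_permutes: "cyclic_pred N permutes {..<N}"
proof -
  have "bij_betw (cyclic_pred N) {..<N} {..<N}"
    by (rule bij_betw_byWitness[where f'="\<lambda>x. if x = N - 1 then 0 else x + 1"])
      (auto simp: cyclic_pred_def)
  then show ?thesis
    by (rule bij_imp_permutes) (simp add: cyclic_pred_def)
qed

lemma cyclic_pred_div:
  assumes "N = (b+1)*b" "x < N"
  shows "cyclic_pred N x div b = shifted_row b x"
proof -
  have "b > 0" using assms by (cases b) auto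
  then have "(N - 1) div b = b"
    using assms(1) by (intro div_nat_eqI) (auto simp: algebra_simps)
  then show ?thesis
    using assms(2) by (simp add: cyclic_pred_def shifted_row_def)
qed

locale cell_rigidity =
  fixes b :: nat and t :: "nat \<Rightarrow> nat"
  assumes three_le: "3 \<le> b"
    and permutes: "t permutes {..<(b+1)*b}"
    and div_iff: "\<And>x y. x < (b+1)*b \<Longrightarrow> y < (b+1)*b \<Longrightarrow> x div b = y div b \<longleftrightarrow> t x div b = t y div b"
    and col_iff: "\<And>x y. x < (b+1)*b \<Longrightarrow> y < (b+1)*b \<Longrightarrow> col b x = col b y \<longleftrightarrow> col b (t x) = col b (t y)"
    and shifted_row_iff: "\<And>x y. x < (b+1)*b \<Longrightarrow> y < (b+1)*b \<Longrightarrow>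
           shifted_row b x = shifted_row b y \<longleftrightarrow> shifted_row b (t x) = shifted_row b (t y)"
begin

abbreviation N :: nat where "N \<equiv> (b+1)*b"

definition row_perm :: "nat \<Rightarrow> nat" where
  "row_perm i = t (i*b) div b"

lemma b_pos: "0 < b"
  using three_le by simp

lemma t_less: "x < N \<Longrightarrow> t x < N"
  using permutes_in_image[OF permutes] by simp

lemma row_start_less: "i \<le> b \<Longrightarrow> i*b < N"
  using b_pos mult_less_cancel2[of i b "b+1"] by simp

lemma t_div: "x < N \<Longrightarrow> t x div b = row_perm (x div b)"
  using div_iff[of x "x div b * b"] row_start_less[of "x div b"] div_le_of_less_Suc_mult b_pos
  by (simp add: row_perm_def)

lemma row_perm_surj: "row_perm ` {..b} = {..b}"
proof (rule endo_inj_surj)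
  show "row_perm ` {..b} \<subseteq> {..b}"
    using t_less row_start_less div_le_of_less_Suc_mult by (auto simp: row_perm_def)
  show "inj_on row_perm {..b}"
  proof (rule inj_onI)
    fix i j assume "i \<in> {..b}" "j \<in> {..b}" "row_perm i = row_perm j"
    then show "i = j"
      using div_iff[of "i*b" "j*b"] row_start_less b_pos by (simp add: row_perm_def)
  qed
qed simp

lemma t_col: "x < N \<Longrightarrow> col b (t x) = row_perm (col b x)"
proof (rule ccontr)
  assume x: "x < N" and ne: "col b (t x) \<noteq> row_perm (col b x)"
  obtain i where i: "i \<le> b" "row_perm i = col b (t x)"
    using row_perm_surj col_le[OF t_less[OF x]] by (metis atMost_iff imageE)
  define y where "y = cell b i (col b x)"
  have "i \<noteq> col b x"
    using ne i by auto
  then have y: "y < N" "y div b = i" "col b y = col b x"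
    using cell_coords[OF i(1) col_le[OF x]] by (simp_all add: y_def)
  then have "col b (t y) = col b (t x)" and "t y div b = row_perm i"
    using col_iff[of y x] x t_div by simp_all
  then show False
    using i col_neq_div by metis
qed

lemma block_end:
  assumes i: "i < b"
  shows "shifted_row b (t ((i+1)*b)) = row_perm i" "col b (t ((i+1)*b)) = row_perm 0"
proof -
  \<comment> \<open>The shifted row \<open>i\<close> contains \<open>p1\<close>, \<open>p2\<close> from row \<open>i\<close> (as \<open>b \<ge> 3\<close>) and the cell \<open>p3\<close> of column 0.\<close>
  define p1 p2 p3 where "p1 = i*b + 1" and "p2 = i*b + 2" and "p3 = (i+1)*b"
  have p3: "p3 < N" "col b p3 = 0" "p3 div b = i + 1"
    using row_start_less[of "i+1"] i b_pos by (simp_all add: p3_def col_def)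
  then have "shifted_row b p3 = i"
    using eq_mult_of_col_eq_0[of b p3] b_pos by (simp add: p3_def)
  have divmod: "(i*b + r) div b = i" "(i*b + r) mod b = r" if "r < b" for r
    using that by simp_all
  have "p1 < p3" "p2 < p3"
    using three_le by (simp_all add: p1_def p2_def p3_def)
  then have p12: "p1 < N" "p2 < N" "p1 div b = i" "p2 div b = i" "p1 mod b = 1" "p2 mod b = 2"
    using divmod[of 1] divmod[of 2] three_le p3(1) unfolding p1_def p2_def by simp_all
  then have "shifted_row b p1 = i" "shifted_row b p2 = i"
    by (simp_all add: shifted_row_eq_div)
  moreover have "t p1 \<noteq> t p2"
    using permutes_inj[OF permutes] by (auto simp: p1_def p2_def dest: injD)
  ultimately have "shifted_row b (t p1) = t p1 div b"
    using p12 div_iff[of p1 p2] shifted_row_iff[of p1 p2] t_less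
    by (intro shifted_row_eq_div_of_twin[where y="t p2"]) simp_all
  then show "shifted_row b (t ((i+1)*b)) = row_perm i"
    using shifted_row_iff[of p3 p1] p3 p12 t_div \<open>shifted_row b p3 = i\<close> \<open>shifted_row b p1 = i\<close>
    by (simp add: p3_def)
  show "col b (t ((i+1)*b)) = row_perm 0"
    using t_col p3 by (simp add: p3_def)
qed

lemma row_perm_0: "row_perm 0 = 0"
proof -
  have "shifted_row b (t b) = col b (t b)"
    using block_end[of 0] b_pos by simp
  then have "t b = b"
    using eq_of_shifted_row_eq_col three_le by simp
  then show ?thesis
    using block_end(2)[of 0] b_pos by (simp add: col_def)
qed

lemma row_perm_id: "i \<le> b \<Longrightarrow> row_perm i = i"
proof (induction i)
  case 0
  show ?case by (fact row_perm_0)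
next
  case (Suc i)
  then have "col b (t ((i+1)*b)) = 0" "shifted_row b (t ((i+1)*b)) = i"
    using block_end row_perm_0 by simp_all
  then have "t ((i+1)*b) = (i+1)*b"
    using eq_mult_of_col_eq_0 by metis
  then show ?case
    using b_pos by (simp add: row_perm_def)
qed

theorem eq_id: "t = id"
proof
  fix x
  show "t x = id x"
  proof (cases "x < N")
    case True
    then have "t x div b = x div b" "col b (t x) = col b x"
      using t_div t_col row_perm_id div_le_of_less_Suc_mult col_le by simp_all
    then show ?thesis
      using cell_of_coords[of b x] cell_of_coords[of b "t x"] by simp
  next
    case False
    then show ?thesis
      using permutes_not_in[OF permutes] by simp
  qed
qed

end

section \<open>The base size of the wreath product\<close>

lemma base_sizeI:
  assumes "S \<subseteq> G" "finite S" "(\<Inter>g\<in>S. conj_set g H) = core G H"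
    and "\<And>S'. S' \<subseteq> G \<Longrightarrow> finite S' \<Longrightarrow> card S' < card S \<Longrightarrow> (\<Inter>g\<in>S'. conj_set g H) \<noteq> core G H"
  shows "base_size G H = card S"
  unfolding base_size_def
proof (rule Least_equality)
  show "\<exists>S'. S' \<subseteq> G \<and> finite S' \<and> card S' = card S \<and> (\<Inter>g\<in>S'. conj_set g H) = core G H"
    using assms(1-3) by blast
  show "card S \<le> k" if "\<exists>S'. S' \<subseteq> G \<and> finite S' \<and> card S' = k \<and> (\<Inter>g\<in>S'. conj_set g H) = core G H" for k
    using that assms(4) not_less by blast
qed

lemma conj_set_wreath_subgroup:
  assumes "g permutes {..<a*b}"
  shows "conj_set g (wreath_subgroup a b) =
    partition_stabiliser {..<a*b} ((`) (inv g) ` std_partition a b)"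
  unfolding wreath_subgroup_eq_partition_stabiliser using assms by (rule conj_set_partition_stabiliser)

lemma id_in_conj_set_wreath_subgroup:
  "g permutes {..<a*b} \<Longrightarrow> id \<in> conj_set g (wreath_subgroup a b)"
  by (simp add: conj_set_wreath_subgroup)

lemma mem_conj_set_wreath_subgroup_iff:
  assumes g: "g permutes {..<a*b}" and b: "b > 0"
  shows "t \<in> conj_set g (wreath_subgroup a b) \<longleftrightarrow> t permutes {..<a*b} \<and>
    (\<forall>x\<in>{..<a*b}. \<forall>y\<in>{..<a*b}. g x div b = g y div b \<longleftrightarrow> g (t x) div b = g (t y) div b)"
  unfolding conj_set_wreath_subgroup[OF g] std_partition_eq_fibres[OF b] image_inv_fibres[OF g]
    partition_stabiliser_fibres by simp

lemma two_conjugates_wreath_subgroup_nontrivial: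
  assumes b: "b \<ge> 1" and g1: "g1 permutes {..<(b+1)*b}" and g2: "g2 permutes {..<(b+1)*b}"
  shows "\<exists>t \<in> conj_set g1 (wreath_subgroup (b+1) b) \<inter> conj_set g2 (wreath_subgroup (b+1) b). t \<noteq> id"
proof -
  have std: "equipartition {..<(b+1)*b} (std_partition (b+1) b) (Suc b) b"
    using equipartition_std_partition[of b "b+1"] b by simp
  show ?thesis
    using equipartitions_common_stabiliser[OF equipartition_image[OF permutes_inv[OF g1] std]
        equipartition_image[OF permutes_inv[OF g2] std] b]
    unfolding conj_set_wreath_subgroup[OF g1] conj_set_wreath_subgroup[OF g2] .
qed

lemma three_conjugates_wreath_subgroup_trivial:
  assumes b: "b \<ge> 3"
  shows "(\<Inter>g\<in>{id, transpose_cells b, cyclic_pred ((b+1)*b)}. conj_set g (wreath_subgroup (b+1) b)) = {id}"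
proof (intro equalityI subsetI)
  fix t assume "t \<in> (\<Inter>g\<in>{id, transpose_cells b, cyclic_pred ((b+1)*b)}. conj_set g (wreath_subgroup (b+1) b))"
  moreover have b0: "b > 0" using b by simp
  ultimately have t: "t permutes {..<(b+1)*b}"
    and "\<forall>x\<in>{..<(b+1)*b}. \<forall>y\<in>{..<(b+1)*b}. x div b = y div b \<longleftrightarrow> t x div b = t y div b"
    and "\<forall>x\<in>{..<(b+1)*b}. \<forall>y\<in>{..<(b+1)*b}. transpose_cells b x div b = transpose_cells b y div b \<longleftrightarrow>
           transpose_cells b (t x) div b = transpose_cells b (t y) div b"
    and "\<forall>x\<in>{..<(b+1)*b}. \<forall>y\<in>{..<(b+1)*b}.
           cyclic_pred ((b+1)*b) x div b = cyclic_pred ((b+1)*b) y div b \<longleftrightarrow>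
           cyclic_pred ((b+1)*b) (t x) div b = cyclic_pred ((b+1)*b) (t y) div b"
    unfolding INT_iff ball_simps
      mem_conj_set_wreath_subgroup_iff[OF permutes_id b0]
      mem_conj_set_wreath_subgroup_iff[OF transpose_cells_permutes b0]
      mem_conj_set_wreath_subgroup_iff[OF cyclic_pred_permutes b0] by simp_all
  moreover have "t x < (b+1)*b" if "x < (b+1)*b" for x
    using permutes_in_image[OF t] that by simp
  ultimately interpret cell_rigidity b t
    using b by unfold_locales (simp_all add: transpose_cells_coords cyclic_pred_div)
  show "t \<in> {id}"
    using eq_id by simp
qed (use id_in_conj_set_wreath_subgroup[OF permutes_id]
    id_in_conj_set_wreath_subgroup[OF transpose_cells_permutes]
    id_in_conj_set_wreath_subgroup[where a="b+1" and b=b, OF cyclic_pred_permutes] in auto)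

lemma card_le_2_imp_subset_pair:
  assumes "finite S" "card S \<le> 2" "S \<subseteq> A" "a \<in> A"
  shows "\<exists>x\<in>A. \<exists>y\<in>A. S \<subseteq> {x, y}"
proof -
  consider "card S = 0" | "card S = 1" | "card S = 2"
    using assms(2) by linarith
  then show ?thesis
  proof cases
    case 1
    then show ?thesis using assms by auto
  next
    case 2
    then show ?thesis using assms(3) by (auto simp: card_1_singleton_iff)
  next
    case 3
    then show ?thesis using assms(3) by (auto simp: card_2_iff)
  qed
qed

lemma Inter_conj_set_wreath_subgroup_neq_id:
  assumes "b \<ge> 1" "S \<subseteq> sym_group ((b+1)*b)" "finite S" "card S \<le> 2"
  shows "(\<Inter>g\<in>S. conj_set g (wreath_subgroup (b+1) b)) \<noteq> {id}"
proof -
  obtain g1 g2 where g: "g1 permutes {..<(b+1)*b}" "g2 permutes {..<(b+1)*b}" "S \<subseteq> {g1, g2}"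
    using card_le_2_imp_subset_pair[OF assms(3,4,2), of id] by (auto simp: sym_group_def)
  then show ?thesis
    using two_conjugates_wreath_subgroup_nontrivial[OF assms(1) g(1,2)] by blast
qed

lemma core_eqI:
  assumes "S \<subseteq> G" "(\<Inter>g\<in>S. conj_set g H) = K" "\<And>g. g \<in> G \<Longrightarrow> K \<subseteq> conj_set g H"
  shows "core G H = K"
  using assms unfolding core_def by blast

theorem proposition2p5:
  fixes a b n :: nat
  assumes "b \<ge> 3" and "a = b + 1" and "n = a * b"
  shows "base_size (sym_group n) (wreath_subgroup a b) = 3"
proof -
  let ?G = "sym_group ((b+1)*b)" and ?H = "wreath_subgroup (b+1) b"
  let ?S = "{id, transpose_cells b, cyclic_pred ((b+1)*b)}"
  have S_G: "?S \<subseteq> ?G"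
    using transpose_cells_permutes cyclic_pred_permutes by (auto simp: sym_group_def)
  have S_base: "(\<Inter>g\<in>?S. conj_set g ?H) = {id}"
    using three_conjugates_wreath_subgroup_trivial assms(1) .
  have core: "core ?G ?H = {id}"
    using S_G S_base id_in_conj_set_wreath_subgroup
    by (intro core_eqI[of ?S]) (auto simp: sym_group_def)
  have "\<not> card ?S \<le> 2"
    using Inter_conj_set_wreath_subgroup_neq_id[OF _ S_G] S_base assms(1) by auto
  then have card_S: "card ?S = 3"
    by (simp add: card_insert_if split: if_splits)
  have "base_size ?G ?H = card ?S"
    using S_G S_base core card_S Inter_conj_set_wreath_subgroup_neq_id assms(1)
    by (intro base_sizeI) auto
  then show ?thesis
    using card_S assms(2,3) by simp
qed

end
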